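(* Let $\mu$ be an $E_2$-invariant Borel probability measure on $\mathbb{T}$ whose support is contained in some $p$-flower $F$ for $E_2$. Then there is a $p$-flower $\tilde F$ for $E_2$ such that $\mathrm{supp}(\mu)\subset\tilde F$ and every atom of $\mu$ lies in the interior of $\tilde F$.
   Context: $\mathbb{T}=\mathbb{R}/\mathbb{Z}$, $E_2(x)=2x\bmod1$. A preimage selector for $E_2$ is a map $\eta:\mathbb{T}\to\mathbb{T}$ with $E_2(\eta(x))=x$ for all $x$, having finitely many discontinuities, each a jump discontinuity (both one-sided limits exist, differ, and one equals the value). A $p$-flower is $\overline{\eta(\mathbb{T})}$ for a preimage selector $\eta$ with exactly $p$ discontinuities; its $p$ connected components (closed intervals) are its petals. An atom of $\mu$ is a point $x$ with $\mu(\{x\})>0$. *)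

theory Defs
  imports "HOL-Probability.Probability"
begin

text \<open>The circle T = R/Z is modelled as the unit circle in the complex plane,
  via the homeomorphism t mod 1 \<mapsto> exp(2 pi i t). The doubling map E2 becomes z \<mapsto> z^2.\<close>

definition circleT :: "complex set" where
  "circleT = sphere 0 1"

definition circ :: "real \<Rightarrow> complex" where
  "circ t = cis (2 * pi * t)"

definition E2 :: "complex \<Rightarrow> complex" where
  "E2 z = z ^ 2"

definition discont :: "(complex \<Rightarrow> complex) \<Rightarrow> complex set" where
  "discont \<eta> = {z \<in> circleT. \<not> continuous (at z within circleT) \<eta>}"

definition jump_at :: "(complex \<Rightarrow> complex) \<Rightarrow> complex \<Rightarrow> bool" where
  "jump_at \<eta> z \<longleftrightarrow> (\<exists>x l r. circ x = z \<and>
      ((\<eta> \<circ> circ) \<longlongrightarrow> l) (at_left x) \<and> ((\<eta> \<circ> circ) \<longlongrightarrow> r) (at_right x) \<and>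
      l \<noteq> r \<and> (\<eta> z = l \<or> \<eta> z = r))"

definition preimage_selector :: "(complex \<Rightarrow> complex) \<Rightarrow> bool" where
  "preimage_selector \<eta> \<longleftrightarrow>
     (\<forall>z\<in>circleT. \<eta> z \<in> circleT \<and> E2 (\<eta> z) = z) \<and>
     finite (discont \<eta>) \<and> (\<forall>z\<in>discont \<eta>. jump_at \<eta> z)"

definition flower :: "nat \<Rightarrow> complex set \<Rightarrow> bool" where
  "flower p F \<longleftrightarrow> (\<exists>\<eta>. preimage_selector \<eta> \<and> card (discont \<eta>) = p \<and>
      F = closure (\<eta> ` circleT))"

definition E2_invariant :: "complex measure \<Rightarrow> bool" where
  "E2_invariant M \<longleftrightarrow>
     (\<forall>A\<in>sets M. emeasure M (E2 -` A \<inter> space M) = emeasure M A)"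

definition measure_support :: "complex measure \<Rightarrow> complex set" where
  "measure_support M = {x \<in> circleT. \<forall>U. openin (top_of_set circleT) U \<and> x \<in> U \<longrightarrow>
      emeasure M U > 0}"

definition atom :: "complex measure \<Rightarrow> complex \<Rightarrow> bool" where
  "atom M x \<longleftrightarrow> x \<in> space M \<and> emeasure M {x} > 0"

end

theory Submission
  imports Defs
begin

text \<open>
  Atoms of an \<open>E2\<close>-invariant probability measure are periodic: along an orbit the mass of
  singletons does not decrease, so the orbit is finite, and it cannot merge, since two distinct
  atoms with a common image would together outweigh that image.

  Let \<open>d\<close> be a jump of the selector \<open>\<eta>\<close> that is an atom, and let \<open>a\<close> be its square root on
  the orbit of \<open>d\<close>. Near \<open>d\<close>, \<open>\<eta>\<close> follows the branch through \<open>a\<close> on one side and the branch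
  through \<open>b = -a\<close> on the other. At a continuity point \<open>z\<close> of \<open>\<eta>\<close>, \<open>-\<eta> z\<close> is not in the
  closure of the image; hence the support misses the arcs before \<open>b\<close> and after \<open>a\<close>, and since
  \<open>b\<close> is null and the iterate \<open>E2\<^sup>k\<close> maps the arc after \<open>b\<close> onto the arc after \<open>a\<close>,
  invariance shows that a whole neighbourhood of \<open>b\<close> is null. Flipping \<open>\<eta>\<close> on a short arc
  after \<open>d\<close> then moves the jump to a non-atom \<open>d'\<close> and only removes points near \<open>b\<close> from the
  image. Repeating this removes all atomic jumps; for an atom \<open>y\<close> the selector is then continuous
  at the atom \<open>E2 y\<close>, which puts \<open>y\<close> into the interior of the flower.
\<close>

lemma circleT_iff_norm: "z \<in> circleT \<longleftrightarrow> norm z = 1"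
  by (simp add: circleT_def)

lemma circleT_nonzero: "z \<in> circleT \<Longrightarrow> z \<noteq> 0"
  by (auto simp: circleT_def)

lemma power_in_circleT: "z \<in> circleT \<Longrightarrow> z ^ n \<in> circleT"
  by (simp add: circleT_iff_norm norm_power)

lemma E2_in_circleT: "z \<in> circleT \<Longrightarrow> E2 z \<in> circleT"
  by (simp add: E2_def power_in_circleT)

lemma square_in_circleT_iff: "(c::complex) ^ 2 \<in> circleT \<longleftrightarrow> c \<in> circleT"
  by (auto simp: circleT_iff_norm norm_power power2_eq_1_iff) (use norm_ge_zero[of c] in linarith)

lemma closed_circleT: "closed circleT"
  by (simp add: circleT_def)

lemma circ_in_circleT [simp]: "circ t \<in> circleT"
  by (simp add: circ_def circleT_def)

lemma circ_nonzero [simp]: "circ t \<noteq> 0"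
  by (simp add: circ_def)

lemma circ_diff: "circ (s - t) = circ s / circ t"
  by (simp add: circ_def cis_divide right_diff_distrib)

lemma cis_power2: "cis \<theta> ^ 2 = cis (2 * \<theta>)"
  using Complex.DeMoivre[of \<theta> 2] by simp

lemma isCont_circ: "isCont circ t"
  unfolding circ_def cis_conv_exp by (intro continuous_intros)

lemma isCont_cis_chart: "isCont (\<lambda>t. c * cis (pi * (t - x))) s"
  unfolding cis_conv_exp by (intro continuous_intros)

lemma circ_eq_imp_eq:
  assumes "circ s = circ t" "\<bar>s - t\<bar> < 1"
  shows "s = t"
proof -
  have "circ (s - t) = 1"
    using assms(1) by (simp add: circ_diff)
  then have "cos (2 * pi * (s - t)) = 1"
    by (simp add: circ_def cis.ctr complex_eq_iff)
  then obtain n :: int where "s - t = n"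
    by (auto simp: cos_one_2pi_int)
  with assms(2) have "n = 0"
    by linarith
  with \<open>s - t = n\<close> show ?thesis
    by simp
qed

lemma circ_Arg_shift:
  assumes "z \<in> circleT"
  shows "circ (t + Arg (z / circ t) / (2 * pi)) = z"
proof -
  have "circ (t + Arg (z / circ t) / (2 * pi)) = circ t * cis (Arg (z / circ t))"
    by (simp add: circ_def cis_mult distrib_left)
  also have "\<dots> = circ t * sgn (z / circ t)"
    using assms circleT_nonzero by (simp add: cis_Arg)
  also have "\<dots> = z"
    using assms by (simp add: circleT_iff_norm sgn_div_norm norm_divide circ_def)
  finally show ?thesis .
qed

lemma continuous_within_circleT_if_isCont_comp_circ:
  assumes "isCont (g \<circ> circ) t"
  shows "continuous (at (circ t) within circleT) g"
proof -
  define h where "h z = t + Arg (z / circ t) / (2 * pi)" for z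
  have "isCont (\<lambda>z. z / circ t) (circ t)"
    by (intro continuous_intros) simp
  moreover have "isCont Arg ((\<lambda>z. z / circ t) (circ t))"
    by (simp add: continuous_at_Arg complex_nonpos_Reals_iff)
  ultimately have "isCont (\<lambda>z. Arg (z / circ t)) (circ t)"
    by (rule isCont_o2)
  then have "isCont h (circ t)"
    unfolding h_def by (intro continuous_intros) auto
  then have "continuous (at (circ t) within circleT) h"
    by (rule continuous_at_imp_continuous_at_within)
  moreover have "continuous (at (h (circ t)) within h ` circleT) (g \<circ> circ)"
    using continuous_at_imp_continuous_at_within[OF assms] by (simp add: h_def)
  ultimately have "continuous (at (circ t) within circleT) ((g \<circ> circ) \<circ> h)"
    by (rule continuous_within_compose)
  moreover have "((g \<circ> circ) \<circ> h) z = g z" if "z \<in> circleT" for z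
    using circ_Arg_shift[OF that] by (simp add: h_def)
  ultimately show ?thesis
    using continuous_transform_within_openin[where S = circleT] by fastforce
qed

lemma isCont_comp_circ_if_continuous_within_circleT:
  assumes "continuous (at (circ t) within circleT) g"
  shows "isCont (g \<circ> circ) t"
proof -
  have "continuous (at (circ t) within range circ) g"
    by (rule continuous_within_subset[OF assms]) auto
  then show ?thesis
    using continuous_within_compose[of t UNIV circ g] isCont_circ by simp
qed

lemma continuous_within_circleT_if_eventually_cis:
  assumes "\<forall>\<^sub>F t in nhds t0. f (circ t) = c * cis (pi * (t - x))"
  shows "continuous (at (circ t0) within circleT) f"
proof -
  have "isCont (f \<circ> circ) t0"
    using isCont_cong[of "f \<circ> circ" "\<lambda>t. c * cis (pi * (t - x))"] assms isCont_cis_chart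
    by simp
  then show ?thesis
    by (rule continuous_within_circleT_if_isCont_comp_circ)
qed

lemma circleT_near_eq_cis:
  assumes "c \<in> circleT" "\<theta> > 0"
  obtains \<rho> where "\<rho> > 0" "\<And>w. w \<in> circleT \<Longrightarrow> dist w c < \<rho> \<Longrightarrow> \<exists>\<phi>. \<bar>\<phi>\<bar> < \<theta> \<and> w = c * cis \<phi>"
proof -
  have "isCont Arg 1"
    by (rule continuous_at_Arg) (simp add: complex_nonpos_Reals_iff)
  then have "\<exists>\<rho>>0. \<forall>z. dist z 1 < \<rho> \<longrightarrow> \<bar>Arg z\<bar> < \<theta>"
    using assms(2) unfolding continuous_at_eps_delta by (auto simp: dist_real_def)
  then obtain \<rho> where \<rho>: "\<rho> > 0" "\<And>z. dist z 1 < \<rho> \<Longrightarrow> \<bar>Arg z\<bar> < \<theta>"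
    by blast
  show ?thesis
  proof (rule that[OF \<rho>(1)])
    fix w assume w: "w \<in> circleT" "dist w c < \<rho>"
    have "w / c - 1 = (w - c) / c"
      using circleT_nonzero[OF assms(1)] by (simp add: field_simps)
    then have "dist (w / c) 1 = dist w c"
      using assms(1) by (simp add: dist_norm norm_divide circleT_iff_norm)
    with \<rho>(2) w(2) have "\<bar>Arg (w / c)\<bar> < \<theta>"
      by simp
    moreover have "w = c * cis (Arg (w / c))"
      using w(1) assms(1) circleT_nonzero by (simp add: cis_Arg sgn_div_norm norm_divide circleT_iff_norm)
    ultimately show "\<exists>\<phi>. \<bar>\<phi>\<bar> < \<theta> \<and> w = c * cis \<phi>"
      by blast
  qed
qed

section \<open>Preimage selectors and their jumps\<close>

lemma preimage_selectorD:
  assumes "preimage_selector \<eta>" "z \<in> circleT"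
  shows "\<eta> z \<in> circleT" "\<eta> z ^ 2 = z"
  using assms by (auto simp: preimage_selector_def E2_def)

lemma closure_selector_image_subset:
  assumes "preimage_selector \<eta>"
  shows "closure (\<eta> ` circleT) \<subseteq> circleT"
  using preimage_selectorD(1)[OF assms] by (intro closure_minimal closed_circleT) auto

lemma selector_fixes_closure_point:
  assumes sel: "preimage_selector \<eta>" and w: "w \<in> closure (\<eta> ` circleT)"
    and cont: "continuous (at (E2 w) within circleT) \<eta>"
  shows "\<eta> (E2 w) = w"
proof -
  obtain y where y: "\<And>n. y n \<in> \<eta> ` circleT" "y \<longlonglongrightarrow> w"
    using w closure_sequential by metis
  then have "\<forall>n. \<exists>z. z \<in> circleT \<and> y n = \<eta> z"
    by blast
  then obtain z where z: "\<And>n. z n \<in> circleT" "\<And>n. y n = \<eta> (z n)"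
    by metis
  have "z = (\<lambda>n. y n ^ 2)"
    using preimage_selectorD(2)[OF sel z(1)] z(2) by auto
  then have "z \<longlonglongrightarrow> E2 w"
    unfolding E2_def using y(2) by (auto intro!: tendsto_intros)
  then have "(\<lambda>n. \<eta> (z n)) \<longlonglongrightarrow> \<eta> (E2 w)"
    by (rule continuous_within_tendsto_compose'[OF cont z(1)])
  moreover have "(\<lambda>n. \<eta> (z n)) = y"
    using z(2) by auto
  ultimately show ?thesis
    using y(2) LIMSEQ_unique by blast
qed

lemma uminus_selector_notin_closure:
  assumes sel: "preimage_selector \<eta>" and z: "z \<in> circleT"
    and cont: "continuous (at z within circleT) \<eta>"
  shows "- \<eta> z \<notin> closure (\<eta> ` circleT)"
proof
  assume "- \<eta> z \<in> closure (\<eta> ` circleT)"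
  moreover have "E2 (- \<eta> z) = z"
    using preimage_selectorD(2)[OF sel z] by (simp add: E2_def)
  ultimately have "\<eta> z = - \<eta> z"
    using selector_fixes_closure_point[OF sel] cont by metis
  then show False
    using preimage_selectorD(1)[OF sel z] circleT_nonzero by force
qed

lemma selector_E2_eq_near_closure_point:
  assumes sel: "preimage_selector \<eta>" and y: "y \<in> closure (\<eta> ` circleT)"
    and cont: "continuous (at (E2 y) within circleT) \<eta>"
  obtains e where "e > 0" "\<And>w. w \<in> circleT \<Longrightarrow> dist w y < e \<Longrightarrow> \<eta> (E2 w) = w"
proof -
  have yT: "y \<in> circleT"
    using y closure_selector_image_subset[OF sel] by auto
  have "continuous (at y within circleT) E2"
    unfolding E2_def by (intro continuous_intros)
  moreover have "continuous (at (E2 y) within E2 ` circleT) \<eta>"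
    using cont by (rule continuous_within_subset) (auto intro: E2_in_circleT)
  ultimately have "continuous (at y within circleT) (\<eta> \<circ> E2)"
    by (rule continuous_within_compose)
  then have "\<exists>e>0. \<forall>w\<in>circleT. dist w y < e \<longrightarrow> dist ((\<eta> \<circ> E2) w) ((\<eta> \<circ> E2) y) < 1"
    unfolding continuous_within_eps_delta using zero_less_one by blast
  then obtain e where e: "e > 0" "\<And>w. w \<in> circleT \<Longrightarrow> dist w y < e \<Longrightarrow> dist (\<eta> (E2 w)) y < 1"
    using selector_fixes_closure_point[OF sel y cont] by auto
  show ?thesis
  proof (rule that[of "min e (1/2)"])
    fix w assume wT: "w \<in> circleT" and "dist w y < min e (1/2)"
    then have wy: "norm (y - w) < min e (1/2)"
      by (simp add: dist_norm norm_minus_commute)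
    have "\<eta> (E2 w) ^ 2 = w ^ 2"
      using preimage_selectorD(2)[OF sel E2_in_circleT[OF wT]] by (simp add: E2_def)
    moreover have "\<eta> (E2 w) \<noteq> - w"
    proof
      assume "\<eta> (E2 w) = - w"
      then have "norm (w + y) < 1"
        using e(2)[OF wT] wy by (simp add: dist_norm norm_minus_commute add.commute)
      moreover have "norm (2 * y) \<le> norm (w + y) + norm (y - w)"
        using norm_triangle_ineq[of "w + y" "y - w"] by simp
      ultimately show False
        using wy yT by (simp add: circleT_iff_norm norm_mult)
    qed
    ultimately show "\<eta> (E2 w) = w"
      by (auto simp: power2_eq_iff)
  qed (use e in simp)
qed

lemma in_interior_closure_selector_image:
  assumes sel: "preimage_selector \<eta>" and y: "y \<in> closure (\<eta> ` circleT)"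
    and cont: "continuous (at (E2 y) within circleT) \<eta>"
  shows "y \<in> (top_of_set circleT) interior_of closure (\<eta> ` circleT)"
proof -
  obtain e where e: "e > 0" "\<And>w. w \<in> circleT \<Longrightarrow> dist w y < e \<Longrightarrow> \<eta> (E2 w) = w"
    using selector_E2_eq_near_closure_point[OF assms] by blast
  define U where "U = circleT \<inter> ball y e"
  have "U \<subseteq> \<eta> ` circleT"
    using e(2) E2_in_circleT by (force simp: U_def dist_commute)
  then have "U \<subseteq> closure (\<eta> ` circleT)"
    using closure_subset by blast
  moreover have "openin (top_of_set circleT) U"
    unfolding U_def by (auto intro!: openin_open_Int)
  ultimately have "U \<subseteq> (top_of_set circleT) interior_of closure (\<eta> ` circleT)"
    by (rule interior_of_maximal)
  moreover have "y \<in> U"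
    using y closure_selector_image_subset[OF sel] e(1) by (auto simp: U_def)
  ultimately show ?thesis
    by blast
qed

lemma selector_limit_square:
  assumes sel: "preimage_selector \<eta>" and lim: "((\<eta> \<circ> circ) \<longlongrightarrow> c) F"
    and "F \<noteq> bot" "F \<le> at x"
  shows "c ^ 2 = circ x"
proof -
  have "((\<lambda>t. \<eta> (circ t) ^ 2) \<longlongrightarrow> c ^ 2) F"
    using lim by (auto intro!: tendsto_intros simp: o_def)
  moreover have "\<eta> (circ t) ^ 2 = circ t" for t
    using preimage_selectorD(2)[OF sel circ_in_circleT] .
  ultimately have "(circ \<longlongrightarrow> c ^ 2) F"
    by simp
  moreover have "(circ \<longlongrightarrow> circ x) F"
    using isCont_circ[of x] \<open>F \<le> at x\<close> unfolding isCont_def by (rule tendsto_mono[rotated])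
  ultimately show ?thesis
    using \<open>F \<noteq> bot\<close> tendsto_unique by blast
qed

text \<open>The quotient \<open>\<eta> (circ t) / cis (pi (t - x))\<close> squares to \<open>c\<^sup>2\<close>, so it is \<open>c\<close> or
  \<open>-c\<close>, and it tends to \<open>c\<close>.\<close>
lemma selector_eventually_eq_cis:
  assumes sel: "preimage_selector \<eta>" and lim: "((\<eta> \<circ> circ) \<longlongrightarrow> c) F"
    and c: "c ^ 2 = circ x" and "F \<le> at x"
  shows "\<forall>\<^sub>F t in F. \<eta> (circ t) = c * cis (pi * (t - x))"
proof -
  define q where "q t = \<eta> (circ t) / cis (pi * (t - x))" for t
  have "((\<lambda>t. cis (pi * (t - x))) \<longlongrightarrow> 1) (at x)"
    using isCont_cis_chart[where c = 1 and x = x and s = x] by (simp add: isCont_def)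
  then have "((\<lambda>t. cis (pi * (t - x))) \<longlongrightarrow> 1) F"
    using \<open>F \<le> at x\<close> by (rule tendsto_mono[rotated])
  then have "(q \<longlongrightarrow> c / 1) F"
    unfolding q_def using lim by (intro tendsto_intros) (auto simp: o_def)
  then have "\<forall>\<^sub>F t in F. dist (q t) c < 1"
    by (intro tendstoD) auto
  then show ?thesis
  proof (rule eventually_mono)
    fix t assume close: "dist (q t) c < 1"
    have "q t ^ 2 = circ t / circ (t - x)"
      unfolding q_def power_divide cis_power2 preimage_selectorD(2)[OF sel circ_in_circleT]
      by (simp add: circ_def mult.assoc)
    also have "\<dots> = c ^ 2"
      using c by (simp add: circ_diff)
    finally have "q t = c \<or> q t = - c"
      by (simp add: power2_eq_iff)
    moreover have "c \<in> circleT"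
      using c square_in_circleT_iff[of c] by simp
    then have "norm (- c - c) = 2"
      by (simp add: circleT_iff_norm norm_mult flip: mult_2)
    ultimately have "q t = c"
      using close by (auto simp: dist_norm)
    then show "\<eta> (circ t) = c * cis (pi * (t - x))"
      by (simp add: q_def divide_eq_eq)
  qed
qed

lemma not_continuous_if_jump_at:
  assumes "jump_at f z"
  shows "\<not> continuous (at z within circleT) f"
proof
  assume cont: "continuous (at z within circleT) f"
  obtain x l r where j: "circ x = z" "((f \<circ> circ) \<longlongrightarrow> l) (at_left x)"
    "((f \<circ> circ) \<longlongrightarrow> r) (at_right x)" "l \<noteq> r"
    using assms unfolding jump_at_def by blast
  have "((f \<circ> circ) \<longlongrightarrow> f z) (at x)"
    using isCont_comp_circ_if_continuous_within_circleT[of x f] cont j(1) by (simp add: isCont_def)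
  then have "((f \<circ> circ) \<longlongrightarrow> f z) (at_left x)" "((f \<circ> circ) \<longlongrightarrow> f z) (at_right x)"
    by (rule tendsto_mono[OF at_le[OF subset_UNIV]])+
  then have "l = f z" "r = f z"
    using tendsto_unique[OF trivial_limit_at_left_real j(2)]
      tendsto_unique[OF trivial_limit_at_right_real j(3)] by blast+
  with j(4) show False
    by simp
qed

lemma jump_at_circI:
  assumes "isCont g t" "isCont h t" "g t \<noteq> h t" "f (circ t) = g t \<or> f (circ t) = h t"
    and "\<forall>\<^sub>F s in at_left t. f (circ s) = g s" "\<forall>\<^sub>F s in at_right t. f (circ s) = h s"
  shows "jump_at f (circ t)"
proof -
  have "(g \<longlongrightarrow> g t) (at_left t)"
    using assms(1) unfolding isCont_def by (rule tendsto_mono[OF at_le[OF subset_UNIV]])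
  moreover have "(h \<longlongrightarrow> h t) (at_right t)"
    using assms(2) unfolding isCont_def by (rule tendsto_mono[OF at_le[OF subset_UNIV]])
  ultimately have "((f \<circ> circ) \<longlongrightarrow> g t) (at_left t)" "((f \<circ> circ) \<longlongrightarrow> h t) (at_right t)"
    using tendsto_cong[OF assms(5)] tendsto_cong[OF assms(6)] by (simp_all add: o_def)
  then show ?thesis
    unfolding jump_at_def using assms(3,4) by blast
qed

lemma jump_at_circ_if_branch_switch:
  assumes "\<rho> > 0" "\<sigma> = 1 \<or> \<sigma> = -1" "c \<noteq> c'"
    and f: "\<And>t. \<bar>t - t0\<bar> < \<rho> \<Longrightarrow> f (circ t) = (if \<sigma> * (t - t0) < 0 then c else c') * cis (pi * (t - x))"
  shows "jump_at f (circ t0)"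
proof -
  define g where "g t = (if \<sigma> = 1 then c else c') * cis (pi * (t - x))" for t
  define h where "h t = (if \<sigma> = 1 then c' else c) * cis (pi * (t - x))" for t
  have "\<forall>\<^sub>F t in at_left t0. t \<in> {t0 - \<rho><..<t0}"
    using assms(1) by (intro eventually_at_left_real) simp
  then have left: "\<forall>\<^sub>F t in at_left t0. f (circ t) = g t"
  proof (rule eventually_mono)
    fix t assume t: "t \<in> {t0 - \<rho><..<t0}"
    then have "\<sigma> * (t - t0) < 0 \<longleftrightarrow> \<sigma> = 1"
      using assms(2) by auto
    with t show "f (circ t) = g t"
      using f[of t] by (auto simp: g_def abs_less_iff)
  qed
  have "\<forall>\<^sub>F t in at_right t0. t \<in> {t0<..<t0 + \<rho>}"
    using assms(1) by (intro eventually_at_right_real) simp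
  then have right: "\<forall>\<^sub>F t in at_right t0. f (circ t) = h t"
  proof (rule eventually_mono)
    fix t assume t: "t \<in> {t0<..<t0 + \<rho>}"
    then have "\<sigma> * (t - t0) < 0 \<longleftrightarrow> \<sigma> \<noteq> 1"
      using assms(2) by auto
    with t show "f (circ t) = h t"
      using f[of t] by (auto simp: h_def abs_less_iff)
  qed
  have "isCont g t0" "isCont h t0"
    unfolding g_def h_def by (rule isCont_cis_chart)+
  moreover have "g t0 \<noteq> h t0"
    using assms(3) by (simp add: g_def h_def)
  moreover have "f (circ t0) = g t0 \<or> f (circ t0) = h t0"
    using f[of t0] assms(1) by (simp add: g_def h_def)
  ultimately show ?thesis
    using jump_at_circI left right by blast
qed

lemma jump_at_open_cong:
  assumes "jump_at f z" "open U" "z \<in> U" "\<And>w. w \<in> U \<Longrightarrow> g w = f w"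
  shows "jump_at g z"
proof -
  obtain x l r where j: "circ x = z" "((f \<circ> circ) \<longlongrightarrow> l) (at_left x)"
    "((f \<circ> circ) \<longlongrightarrow> r) (at_right x)" "l \<noteq> r" "f z = l \<or> f z = r"
    using assms(1) unfolding jump_at_def by blast
  have "\<forall>\<^sub>F t in at x. circ t \<in> U"
    using isCont_circ[of x] assms(2,3) j(1) unfolding isCont_def by (intro topological_tendstoD) auto
  then have "\<forall>\<^sub>F t in at x. (f \<circ> circ) t = (g \<circ> circ) t"
    by (rule eventually_mono) (simp add: assms(4))
  moreover have "at_left x \<le> at x" "at_right x \<le> at x"
    by (simp_all add: at_le)
  ultimately have "\<forall>\<^sub>F t in at_left x. (f \<circ> circ) t = (g \<circ> circ) t"
    "\<forall>\<^sub>F t in at_right x. (f \<circ> circ) t = (g \<circ> circ) t"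
    using filter_leD by blast+
  then have "((g \<circ> circ) \<longlongrightarrow> l) (at_left x)" "((g \<circ> circ) \<longlongrightarrow> r) (at_right x)"
    using j(2,3) tendsto_cong by blast+
  then show ?thesis
    unfolding jump_at_def using j(1,4,5) assms(3,4) by auto
qed

lemma eventually_at_left_right_realE:
  fixes x :: real
  assumes "\<forall>\<^sub>F t in at_left x. P t" "\<forall>\<^sub>F t in at_right x. Q t"
  obtains \<delta> where "\<delta> > 0" "\<And>t. \<bar>t - x\<bar> < \<delta> \<Longrightarrow> t < x \<Longrightarrow> P t"
    "\<And>t. \<bar>t - x\<bar> < \<delta> \<Longrightarrow> x < t \<Longrightarrow> Q t"
proof -
  obtain l where l: "l < x" "\<And>t. l < t \<Longrightarrow> t < x \<Longrightarrow> P t"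
    using assms(1) unfolding eventually_at_left_field by blast
  obtain r where r: "x < r" "\<And>t. x < t \<Longrightarrow> t < r \<Longrightarrow> Q t"
    using assms(2) unfolding eventually_at_right_field by blast
  show ?thesis
    by (rule that[of "min (x - l) (r - x)"]) (use l r in \<open>auto simp: abs_less_iff\<close>)
qed

text \<open>The sign \<open>\<sigma> = \<plusminus>1\<close> encodes on which side of the jump at \<open>circ x\<close> the selector follows
  the branch through \<open>b\<close>: it is the side of the points \<open>circ (x + \<sigma> u)\<close> with \<open>0 < u < \<delta>\<close>.\<close>
locale jump_chart =
  fixes \<eta> :: "complex \<Rightarrow> complex" and x \<sigma> :: real and a b :: complex and \<delta> :: real
  assumes selector: "preimage_selector \<eta>"
    and sign: "\<sigma> = 1 \<or> \<sigma> = -1"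
    and a_square: "a ^ 2 = circ x"
    and b_eq: "b = - a"
    and width_pos: "0 < \<delta>"
    and width_le: "\<delta> \<le> 1/2"
    and eta_b_side: "\<And>t. \<bar>t - x\<bar> < \<delta> \<Longrightarrow> 0 < \<sigma> * (t - x) \<Longrightarrow> \<eta> (circ t) = b * cis (pi * (t - x))"
    and eta_a_side: "\<And>t. \<bar>t - x\<bar> < \<delta> \<Longrightarrow> \<sigma> * (t - x) < 0 \<Longrightarrow> \<eta> (circ t) = a * cis (pi * (t - x))"
begin

lemma sign_mult_self [simp]: "\<sigma> * (\<sigma> * y) = y"
  using sign by auto

lemma abs_sign_mult [simp]: "\<bar>\<sigma> * y\<bar> = \<bar>y\<bar>"
  using sign by auto

lemma a_in_circleT: "a \<in> circleT"
  using a_square square_in_circleT_iff[of a] by simp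

lemma b_in_circleT: "b \<in> circleT"
  using a_in_circleT by (simp add: b_eq circleT_iff_norm)

lemma a_ne_b: "a \<noteq> b"
  using a_in_circleT circleT_nonzero by (auto simp: b_eq)

lemma eta_center: "\<eta> (circ x) = a \<or> \<eta> (circ x) = b"
proof -
  have "\<eta> (circ x) ^ 2 = a ^ 2"
    using preimage_selectorD(2)[OF selector circ_in_circleT] a_square by simp
  then show ?thesis
    by (simp add: b_eq power2_eq_iff)
qed

lemma circ_window_eq_imp_eq:
  assumes "circ t = circ t'" "\<bar>t - x\<bar> < \<delta>" "\<bar>t' - x\<bar> < \<delta>"
  shows "t = t'"
  using circ_eq_imp_eq[OF assms(1)] assms(2,3) width_le by linarith

lemma circ_in_window_image_iff:
  assumes "\<bar>t - x\<bar> < \<delta>" "I \<subseteq> {-\<delta><..<\<delta>}"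
  shows "circ t \<in> (\<lambda>u. circ (x + \<sigma> * u)) ` I \<longleftrightarrow> \<sigma> * (t - x) \<in> I"
proof
  assume "circ t \<in> (\<lambda>u. circ (x + \<sigma> * u)) ` I"
  then obtain u where u: "u \<in> I" "circ t = circ (x + \<sigma> * u)"
    by blast
  with assms have "t = x + \<sigma> * u"
    by (intro circ_window_eq_imp_eq) (auto simp: abs_less_iff)
  with u(1) show "\<sigma> * (t - x) \<in> I"
    by simp
next
  assume "\<sigma> * (t - x) \<in> I"
  then show "circ t \<in> (\<lambda>u. circ (x + \<sigma> * u)) ` I"
    by (intro image_eqI[of _ _ "\<sigma> * (t - x)"]) simp_all
qed

lemma eventually_nhds_window:
  assumes "\<bar>t - x\<bar> < \<delta>" "c < \<sigma> * (t - x)" "\<sigma> * (t - x) < e"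
  shows "\<forall>\<^sub>F t' in nhds t. \<bar>t' - x\<bar> < \<delta> \<and> c < \<sigma> * (t' - x) \<and> \<sigma> * (t' - x) < e"
proof -
  have "open {t'. \<bar>t' - x\<bar> < \<delta> \<and> c < \<sigma> * (t' - x) \<and> \<sigma> * (t' - x) < e}"
    by (intro open_Collect_conj open_Collect_less continuous_intros)
  with assms show ?thesis
    using eventually_nhds_in_open by fastforce
qed

lemma continuous_eta_off_center:
  assumes "\<bar>t - x\<bar> < \<delta>" "t \<noteq> x"
  shows "continuous (at (circ t) within circleT) \<eta>"
proof (cases "0 < \<sigma> * (t - x)")
  case True
  have "\<sigma> * (t - x) < 1"
    using assms(1) width_le abs_sign_mult[of "t - x"] by linarith
  with True have "\<forall>\<^sub>F t' in nhds t. \<bar>t' - x\<bar> < \<delta> \<and> 0 < \<sigma> * (t' - x) \<and> \<sigma> * (t' - x) < 1"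
    by (rule eventually_nhds_window[OF assms(1)])
  then have "\<forall>\<^sub>F t' in nhds t. \<eta> (circ t') = b * cis (pi * (t' - x))"
    by (rule eventually_mono) (auto intro: eta_b_side)
  then show ?thesis
    by (rule continuous_within_circleT_if_eventually_cis)
next
  case False
  with assms(2) sign have neg: "\<sigma> * (t - x) < 0"
    by auto
  moreover have "-1 < \<sigma> * (t - x)"
    using assms(1) width_le abs_sign_mult[of "t - x"] by linarith
  ultimately have "\<forall>\<^sub>F t' in nhds t. \<bar>t' - x\<bar> < \<delta> \<and> -1 < \<sigma> * (t' - x) \<and> \<sigma> * (t' - x) < 0"
    by (intro eventually_nhds_window[OF assms(1)])
  then have "\<forall>\<^sub>F t' in nhds t. \<eta> (circ t') = a * cis (pi * (t' - x))"
    by (rule eventually_mono) (auto intro: eta_a_side)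
  then show ?thesis
    by (rule continuous_within_circleT_if_eventually_cis)
qed

lemma a_branch_notin_closure:
  assumes "0 < u" "u < \<delta>"
  shows "a * cis (pi * (\<sigma> * u)) \<notin> closure (\<eta> ` circleT)"
proof -
  have "\<eta> (circ (x + \<sigma> * u)) = b * cis (pi * (\<sigma> * u))"
    using assms by (intro eta_b_side[of "x + \<sigma> * u", simplified]) auto
  moreover have "- \<eta> (circ (x + \<sigma> * u)) \<notin> closure (\<eta> ` circleT)"
    using assms sign
    by (intro uminus_selector_notin_closure[OF selector circ_in_circleT continuous_eta_off_center]) auto
  ultimately show ?thesis
    by (simp add: b_eq)
qed

lemma b_branch_notin_closure:
  assumes "-\<delta> < u" "u < 0"
  shows "b * cis (pi * (\<sigma> * u)) \<notin> closure (\<eta> ` circleT)"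
proof -
  have "\<eta> (circ (x + \<sigma> * u)) = a * cis (pi * (\<sigma> * u))"
    using assms by (intro eta_a_side[of "x + \<sigma> * u", simplified]) auto
  moreover have "- \<eta> (circ (x + \<sigma> * u)) \<notin> closure (\<eta> ` circleT)"
    using assms sign
    by (intro uminus_selector_notin_closure[OF selector circ_in_circleT continuous_eta_off_center]) auto
  ultimately show ?thesis
    by (simp add: b_eq)
qed

lemma b_branch_power:
  assumes "k \<ge> 1" "a ^ 2 ^ k = a"
  shows "(b * cis (pi * (\<sigma> * u))) ^ 2 ^ k = a * cis (pi * (\<sigma> * (2 ^ k * u)))"
proof -
  have "b ^ 2 ^ k = a"
    using assms by (simp add: b_eq power_minus_even)
  then show ?thesis
    by (simp add: power_mult_distrib Complex.DeMoivre mult_ac)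
qed

text \<open>Points just before \<open>b\<close> are off the closure, and points just after \<open>b\<close> are mapped by the
  \<open>k\<close>-th iterate of \<open>E2\<close> to points just after \<open>a = b ^ 2 ^ k\<close>, which are off the closure too.\<close>
lemma b_branch_cases:
  assumes "k \<ge> 1" "a ^ 2 ^ k = a" "\<bar>u\<bar> < \<delta> / 2 ^ k"
  shows "u = 0 \<or> b * cis (pi * (\<sigma> * u)) \<notin> closure (\<eta> ` circleT)
    \<or> (b * cis (pi * (\<sigma> * u))) ^ 2 ^ k \<notin> closure (\<eta> ` circleT)"
proof -
  have "\<delta> / 2 ^ k \<le> \<delta>"
    using width_pos by (simp add: divide_le_eq)
  consider "u < 0" | "u = 0" | "0 < u"
    by linarith
  then show ?thesis
  proof cases
    case 1
    with assms(3) \<open>\<delta> / 2 ^ k \<le> \<delta>\<close> show ?thesis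
      using b_branch_notin_closure[of u] by auto
  next
    case 3
    moreover have "2 ^ k * u < \<delta>"
      using assms(3) 3 by (simp add: field_simps)
    ultimately show ?thesis
      using a_branch_notin_closure[of "2 ^ k * u"] b_branch_power[OF assms(1,2)] by auto
  qed simp
qed

lemma near_b_cases:
  assumes period: "k \<ge> 1" "a ^ 2 ^ k = a"
  obtains \<rho> where "\<rho> > 0" "\<And>w. w \<in> circleT \<Longrightarrow> dist w b < \<rho> \<Longrightarrow>
    w = b \<or> w \<notin> closure (\<eta> ` circleT) \<or> w ^ 2 ^ k \<notin> closure (\<eta> ` circleT)"
proof -
  obtain \<rho> where \<rho>: "\<rho> > 0"
    "\<And>w. w \<in> circleT \<Longrightarrow> dist w b < \<rho> \<Longrightarrow> \<exists>\<phi>. \<bar>\<phi>\<bar> < pi * (\<delta> / 2 ^ k) \<and> w = b * cis \<phi>"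
    using circleT_near_eq_cis[OF b_in_circleT, of "pi * (\<delta> / 2 ^ k)"] width_pos by auto
  show ?thesis
  proof (rule that[OF \<rho>(1)])
    fix w assume "w \<in> circleT" "dist w b < \<rho>"
    then obtain \<phi> where \<phi>: "\<bar>\<phi>\<bar> < pi * (\<delta> / 2 ^ k)" "w = b * cis \<phi>"
      using \<rho>(2) by blast
    define u where "u = \<sigma> * \<phi> / pi"
    have w: "w = b * cis (pi * (\<sigma> * u))"
      using \<phi>(2) by (simp add: u_def)
    have "\<bar>u\<bar> < \<delta> / 2 ^ k"
      using \<phi>(1) sign by (auto simp: u_def abs_mult field_simps)
    then consider "u = 0" | "w \<notin> closure (\<eta> ` circleT)" | "w ^ 2 ^ k \<notin> closure (\<eta> ` circleT)"
      using b_branch_cases[OF period] unfolding w by blast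
    then show "w = b \<or> w \<notin> closure (\<eta> ` circleT) \<or> w ^ 2 ^ k \<notin> closure (\<eta> ` circleT)"
      by cases (simp_all add: w)
  qed
qed

end

lemma jump_chart_if_jump_at:
  assumes sel: "preimage_selector \<eta>" and jump: "jump_at \<eta> d" and a: "a ^ 2 = d"
  obtains x \<sigma> \<delta> where "circ x = d" "jump_chart \<eta> x \<sigma> a (- a) \<delta>"
proof -
  obtain x l r where j: "circ x = d" "((\<eta> \<circ> circ) \<longlongrightarrow> l) (at_left x)"
    "((\<eta> \<circ> circ) \<longlongrightarrow> r) (at_right x)" "l \<noteq> r"
    using jump unfolding jump_at_def by blast
  have le: "at_left x \<le> at x" "at_right x \<le> at x"
    by (simp_all add: at_le)
  have l: "l ^ 2 = circ x" and r: "r ^ 2 = circ x"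
    using selector_limit_square[OF sel j(2) _ le(1)] selector_limit_square[OF sel j(3) _ le(2)]
    by simp_all
  with j(4) have r_eq: "r = - l"
    by (metis power2_eq_iff)
  obtain \<delta>0 where \<delta>0: "\<delta>0 > 0"
    "\<And>t. \<bar>t - x\<bar> < \<delta>0 \<Longrightarrow> t < x \<Longrightarrow> \<eta> (circ t) = l * cis (pi * (t - x))"
    "\<And>t. \<bar>t - x\<bar> < \<delta>0 \<Longrightarrow> x < t \<Longrightarrow> \<eta> (circ t) = r * cis (pi * (t - x))"
    using eventually_at_left_right_realE[OF selector_eventually_eq_cis[OF sel j(2) l le(1)]
        selector_eventually_eq_cis[OF sel j(3) r le(2)]] by blast
  define \<delta> where "\<delta> = min \<delta>0 (1/2)"
  have "a = l \<or> a = - l"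
    using a l j(1) by (metis power2_eq_iff)
  then show ?thesis
  proof
    assume "a = l"
    then have "jump_chart \<eta> x 1 a (- a) \<delta>"
      using sel l \<delta>0 r_eq by unfold_locales (auto simp: \<delta>_def)
    with j(1) show ?thesis
      by (rule that)
  next
    assume "a = - l"
    then have "jump_chart \<eta> x (- 1) a (- a) \<delta>"
      using sel l \<delta>0 r_eq by unfold_locales (auto simp: \<delta>_def)
    with j(1) show ?thesis
      by (rule that)
  qed
qed

section \<open>Moving a jump\<close>

text \<open>Flipping \<open>\<eta>\<close> on the arc \<open>circ (x + \<sigma> u)\<close>, \<open>0 < u < s\<close>, and putting the value \<open>a\<close> at
  \<open>circ x\<close> moves the jump from \<open>circ x\<close> to \<open>d'\<close>.\<close>
locale jump_surgery = jump_chart +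
  fixes s :: real
  assumes cut_pos: "0 < s" and cut_less: "s < \<delta>"
begin

definition d' :: complex where
  "d' = circ (x + \<sigma> * s)"

definition arc :: "complex set" where
  "arc = (\<lambda>u. circ (x + \<sigma> * u)) ` {0..s}"

definition \<eta>' :: "complex \<Rightarrow> complex" where
  "\<eta>' z = (if z \<in> (\<lambda>u. circ (x + \<sigma> * u)) ` {0<..<s} then - \<eta> z
     else if z = circ x then a else \<eta> z)"

lemma center_in_arc: "circ x \<in> arc"
  using cut_pos by (auto simp: arc_def intro: image_eqI[of _ _ 0])

lemma d'_in_arc: "d' \<in> arc"
  using cut_pos by (auto simp: arc_def d'_def)

lemma d'_ne_center: "d' \<noteq> circ x"
proof
  assume "d' = circ x"
  then have "x + \<sigma> * s = x"
    using cut_pos cut_less width_pos by (intro circ_window_eq_imp_eq) (simp_all add: d'_def)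
  with cut_pos have "\<sigma> = 0"
    by simp
  with sign show False
    by simp
qed

lemma closed_arc: "closed arc"
  unfolding arc_def circ_def cis_conv_exp
  by (intro compact_imp_closed compact_continuous_image continuous_intros compact_Icc)

lemma eta'_off_arc: "z \<notin> arc \<Longrightarrow> \<eta>' z = \<eta> z"
  using center_in_arc by (auto simp: \<eta>'_def arc_def)

lemma eta'_window:
  assumes "\<bar>t - x\<bar> < \<delta>"
  shows "\<eta>' (circ t) = (if \<sigma> * (t - x) < s then a else b) * cis (pi * (t - x))"
proof -
  have flip_iff: "circ t \<in> (\<lambda>u. circ (x + \<sigma> * u)) ` {0<..<s} \<longleftrightarrow> 0 < \<sigma> * (t - x) \<and> \<sigma> * (t - x) < s"
    using circ_in_window_image_iff[OF assms, of "{0<..<s}"] cut_less by fastforce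
  have center_iff: "circ t = circ x \<longleftrightarrow> t = x"
    using circ_window_eq_imp_eq[OF _ assms, of x] width_pos by auto
  consider "\<sigma> * (t - x) < 0" | "t = x" | "0 < \<sigma> * (t - x)" "\<sigma> * (t - x) < s" | "s \<le> \<sigma> * (t - x)"
    using sign by fastforce
  then show ?thesis
  proof cases
    case 1
    then show ?thesis
      using flip_iff center_iff eta_a_side[OF assms] cut_pos by (auto simp: \<eta>'_def)
  next
    case 2
    then show ?thesis
      using flip_iff cut_pos by (simp add: \<eta>'_def)
  next
    case 3
    then show ?thesis
      using flip_iff eta_b_side[OF assms] by (simp add: \<eta>'_def b_eq)
  next
    case 4
    then show ?thesis
      using flip_iff center_iff eta_b_side[OF assms] cut_pos by (auto simp: \<eta>'_def)
  qed
qed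

lemma continuous_eta'_on_arc:
  assumes "z \<in> arc" "z \<noteq> d'"
  shows "continuous (at z within circleT) \<eta>'"
proof -
  obtain u where u: "0 \<le> u" "u \<le> s" "z = circ (x + \<sigma> * u)"
    using assms(1) by (auto simp: arc_def)
  with assms(2) have "u < s"
    by (cases "u = s") (auto simp: d'_def)
  with u have "\<forall>\<^sub>F t in nhds (x + \<sigma> * u). \<bar>t - x\<bar> < \<delta> \<and> -1 < \<sigma> * (t - x) \<and> \<sigma> * (t - x) < s"
    using cut_less by (intro eventually_nhds_window) auto
  then have "\<forall>\<^sub>F t in nhds (x + \<sigma> * u). \<eta>' (circ t) = a * cis (pi * (t - x))"
    by (rule eventually_mono) (simp add: eta'_window)
  then show ?thesis
    unfolding u(3) by (rule continuous_within_circleT_if_eventually_cis)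
qed

lemma continuous_eta_on_arc:
  assumes "z \<in> arc" "z \<noteq> circ x"
  shows "continuous (at z within circleT) \<eta>"
proof -
  obtain u where u: "0 \<le> u" "u \<le> s" "z = circ (x + \<sigma> * u)"
    using assms by (auto simp: arc_def)
  with assms(2) have "u \<noteq> 0"
    by auto
  with u cut_less sign show ?thesis
    by (auto intro!: continuous_eta_off_center)
qed

lemma continuous_eta'_off_arc_iff:
  assumes "z \<in> circleT" "z \<notin> arc"
  shows "continuous (at z within circleT) \<eta>' \<longleftrightarrow> continuous (at z within circleT) \<eta>"
proof -
  have "openin (top_of_set circleT) (circleT \<inter> - arc)"
    using closed_arc by (intro openin_open_Int) auto
  then have "openin (top_of_set circleT) (circleT - arc)"
    by (simp add: Diff_eq)
  then show ?thesis
    using assms eta'_off_arc continuous_transform_within_openin[of z circleT _ "circleT - arc"]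
    by (metis DiffD2 DiffI)
qed

lemma eta'_near_cut:
  assumes "\<bar>t - (x + \<sigma> * s)\<bar> < min s (\<delta> - s)"
  shows "\<eta>' (circ t) = (if \<sigma> * (t - (x + \<sigma> * s)) < 0 then a else b) * cis (pi * (t - x))"
proof -
  have "\<bar>t - x\<bar> < \<delta>" "\<sigma> * (t - x) < s \<longleftrightarrow> \<sigma> * (t - (x + \<sigma> * s)) < 0"
    using assms sign by (auto simp: abs_less_iff)
  then show ?thesis
    by (simp add: eta'_window)
qed

lemma jump_at_d': "jump_at \<eta>' d'"
proof -
  have "jump_at \<eta>' (circ (x + \<sigma> * s))"
    using cut_pos cut_less sign a_ne_b eta'_near_cut
    by (intro jump_at_circ_if_branch_switch[where \<rho> = "min s (\<delta> - s)"]) auto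
  then show ?thesis
    by (simp add: d'_def)
qed

lemma discont_eta': "discont \<eta>' = insert d' (discont \<eta> - {circ x})"
proof (intro equalityI subsetI)
  fix z assume z: "z \<in> discont \<eta>'"
  then have zT: "z \<in> circleT" and "\<not> continuous (at z within circleT) \<eta>'"
    by (auto simp: discont_def)
  then show "z \<in> insert d' (discont \<eta> - {circ x})"
    using continuous_eta'_on_arc continuous_eta'_off_arc_iff center_in_arc
    by (cases "z \<in> arc") (auto simp: discont_def)
next
  fix z assume z: "z \<in> insert d' (discont \<eta> - {circ x})"
  show "z \<in> discont \<eta>'"
  proof (cases "z = d'")
    case True
    then show ?thesis
      using not_continuous_if_jump_at[OF jump_at_d'] by (simp add: discont_def d'_def)
  next
    case False
    with z have "z \<in> discont \<eta>" "z \<notin> arc"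
      using continuous_eta_on_arc by (auto simp: discont_def)
    then show ?thesis
      using continuous_eta'_off_arc_iff by (auto simp: discont_def)
  qed
qed

lemma d'_notin_discont: "d' \<notin> discont \<eta>"
  using continuous_eta_on_arc[OF d'_in_arc d'_ne_center] by (simp add: discont_def)

lemma selector_eta': "preimage_selector \<eta>'"
  unfolding preimage_selector_def
proof (intro conjI)
  show "\<forall>z\<in>circleT. \<eta>' z \<in> circleT \<and> E2 (\<eta>' z) = z"
    using preimage_selectorD[OF selector] a_in_circleT a_square
    by (auto simp: \<eta>'_def E2_def circleT_iff_norm)
  show "finite (discont \<eta>')"
    using selector by (simp add: discont_eta' preimage_selector_def)
  show "\<forall>z\<in>discont \<eta>'. jump_at \<eta>' z"
  proof
    fix z assume z: "z \<in> discont \<eta>'"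
    show "jump_at \<eta>' z"
    proof (cases "z = d'")
      case True
      then show ?thesis
        by (simp add: jump_at_d')
    next
      case False
      with z have "z \<in> discont \<eta>" "z \<noteq> circ x"
        by (auto simp: discont_eta')
      then have "jump_at \<eta> z" "z \<notin> arc"
        using selector continuous_eta_on_arc unfolding preimage_selector_def discont_def by blast+
      moreover have "open (- arc)"
        using closed_arc by (rule open_Compl)
      ultimately show ?thesis
        using eta'_off_arc by (auto intro!: jump_at_open_cong[of \<eta> z "- arc"])
    qed
  qed
qed

lemma closure_image_eta'_superset:
  assumes "S \<subseteq> closure (\<eta> ` circleT)" "\<forall>u\<in>{0..s}. b * cis (pi * (\<sigma> * u)) \<notin> S"
  shows "S \<subseteq> closure (\<eta>' ` circleT)"
proof -
  define R where "R = (\<lambda>u. b * cis (pi * (\<sigma> * u))) ` {0..s}"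
  have "\<eta> z \<in> R" if ne: "\<eta>' z \<noteq> \<eta> z" for z
  proof -
    have "z \<in> arc"
      using ne eta'_off_arc by auto
    then obtain u where u: "0 \<le> u" "u \<le> s" "z = circ (x + \<sigma> * u)"
      by (auto simp: arc_def)
    show ?thesis
    proof (cases "u = 0")
      case True
      have "\<eta>' (circ x) = a"
        using eta'_window[of x] width_pos cut_pos by simp
      with True u(3) ne have "\<eta> z = b"
        using eta_center by auto
      then show ?thesis
        using cut_pos by (auto simp: R_def intro!: image_eqI[of _ _ 0])
    next
      case False
      then have "\<eta> z = b * cis (pi * (\<sigma> * u))"
        using eta_b_side[of "x + \<sigma> * u"] u cut_less sign by auto
      then show ?thesis
        using u by (auto simp: R_def)
    qed
  qed
  then have "\<eta> ` circleT \<subseteq> \<eta>' ` circleT \<union> R"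
    by force
  moreover have "closed R"
    unfolding R_def cis_conv_exp
    by (intro compact_imp_closed compact_continuous_image continuous_intros compact_Icc)
  ultimately have "closure (\<eta> ` circleT) \<subseteq> closure (\<eta>' ` circleT) \<union> R"
    by (metis closure_Un closure_closed closure_mono)
  with assms show ?thesis
    unfolding R_def by blast
qed

end

lemma (in jump_chart) exists_cut_avoiding:
  assumes "countable A" "0 < m" "m \<le> \<delta>"
  obtains s where "0 < s" "s < m" "circ (x + \<sigma> * s) \<notin> A"
proof -
  have "inj_on (\<lambda>u. circ (x + \<sigma> * u)) {0<..<m}"
  proof (rule inj_onI)
    fix u v assume "u \<in> {0<..<m}" "v \<in> {0<..<m}" "circ (x + \<sigma> * u) = circ (x + \<sigma> * v)"
    with assms(3) have "x + \<sigma> * u = x + \<sigma> * v"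
      by (intro circ_window_eq_imp_eq) auto
    then show "u = v"
      using sign by auto
  qed
  then have "uncountable ((\<lambda>u. circ (x + \<sigma> * u)) ` {0<..<m})"
    using uncountable_open_interval[of 0 m] assms(2) countable_image_inj_on by blast
  with assms(1) have "\<not> (\<lambda>u. circ (x + \<sigma> * u)) ` {0<..<m} \<subseteq> A"
    using countable_subset by blast
  then obtain s where "s \<in> {0<..<m}" "circ (x + \<sigma> * s) \<notin> A"
    by blast
  then show ?thesis
    by (intro that) auto
qed

lemma (in jump_chart) move_jump:
  assumes A: "countable A" and \<epsilon>: "0 < \<epsilon>" and free: "\<forall>u\<in>{0..\<epsilon>}. b * cis (pi * (\<sigma> * u)) \<notin> S"
    and S: "S \<subseteq> closure (\<eta> ` circleT)"
  obtains \<eta>' d' where "preimage_selector \<eta>'" "discont \<eta>' = insert d' (discont \<eta> - {circ x})"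
    "d' \<notin> discont \<eta>" "d' \<notin> A" "S \<subseteq> closure (\<eta>' ` circleT)"
proof -
  obtain s where s: "0 < s" "s < min \<delta> \<epsilon>" "circ (x + \<sigma> * s) \<notin> A"
    using exists_cut_avoiding[OF A, of "min \<delta> \<epsilon>"] width_pos \<epsilon> by auto
  interpret jump_surgery \<eta> x \<sigma> a b \<delta> s
    using s by unfold_locales auto
  show ?thesis
  proof (rule that[OF selector_eta' discont_eta' d'_notin_discont])
    show "d' \<notin> A"
      using s by (simp add: d'_def)
    show "S \<subseteq> closure (\<eta>' ` circleT)"
      using closure_image_eta'_superset[OF S] free s by auto
  qed
qed

section \<open>Invariant measures and their atoms\<close>

locale E2_invariant_prob_space = prob_space M for M :: "complex measure" +
  assumes sets_eq: "sets M = sets (restrict_space borel circleT)"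
    and invariant: "E2_invariant M"
begin

lemma space_eq: "space M = circleT"
  using sets_eq_imp_space_eq[OF sets_eq] by (simp add: space_restrict_space)

lemma sets_iff: "A \<in> sets M \<longleftrightarrow> A \<subseteq> circleT \<and> A \<in> sets borel"
  using sets_eq sets_restrict_space_iff[of circleT borel A] closed_circleT by simp

lemma singleton_in_sets: "z \<in> circleT \<Longrightarrow> {z} \<in> sets M"
  by (simp add: sets_iff)

lemma openin_in_sets: "openin (top_of_set circleT) U \<Longrightarrow> U \<in> sets M"
  using closed_circleT by (auto simp: sets_iff openin_open)

lemma power_preimage_in_sets:
  assumes "A \<in> sets M"
  shows "(\<lambda>z. z ^ n) -` A \<inter> circleT \<in> sets M"
proof -
  have "(\<lambda>z::complex. z ^ n) \<in> borel_measurable borel"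
    by (intro borel_measurable_continuous_onI continuous_intros)
  then have "(\<lambda>z::complex. z ^ n) -` A \<inter> space borel \<in> sets borel"
    using assms sets_iff by (intro measurable_sets) auto
  then show ?thesis
    using closed_circleT by (auto simp: sets_iff)
qed

lemma emeasure_power2_preimage:
  assumes "A \<in> sets M"
  shows "emeasure M ((\<lambda>z. z ^ 2 ^ k) -` A \<inter> circleT) = emeasure M A"
  using assms
proof (induction k arbitrary: A)
  case 0
  then show ?case
    using sets_iff by (simp add: Int_absorb2 vimage_def)
next
  case (Suc k)
  define B where "B = (\<lambda>z. z ^ 2 ^ k) -` A \<inter> circleT"
  have "B \<in> sets M"
    unfolding B_def by (rule power_preimage_in_sets[OF Suc.prems])
  have "(\<lambda>z. z ^ 2 ^ Suc k) -` A \<inter> circleT = E2 -` B \<inter> space M"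
    by (auto simp: B_def E2_def space_eq power_in_circleT power_mult[symmetric] mult.commute)
  also have "emeasure M \<dots> = emeasure M B"
    using invariant \<open>B \<in> sets M\<close> by (simp add: E2_invariant_def)
  also have "\<dots> = emeasure M A"
    using Suc by (simp add: B_def)
  finally show ?case .
qed

lemma measure_power2_preimage:
  "A \<in> sets M \<Longrightarrow> measure M ((\<lambda>z. z ^ 2 ^ k) -` A \<inter> circleT) = measure M A"
  using emeasure_power2_preimage by (simp add: measure_def)

lemma atom_iff: "atom M z \<longleftrightarrow> z \<in> circleT \<and> measure M {z} > 0"
  using emeasure_eq_measure[of "{z}"] by (auto simp: atom_def space_eq)

lemma countable_atoms: "countable {z. atom M z}"
  using countable_support by (rule countable_subset[rotated]) (auto simp: atom_iff)

lemma measure_singleton_le_power2: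
  assumes "z \<in> circleT"
  shows "measure M {z} \<le> measure M {z ^ 2 ^ k}"
proof -
  have sets: "{z ^ 2 ^ k} \<in> sets M"
    using assms by (intro singleton_in_sets power_in_circleT)
  have "measure M {z} \<le> measure M ((\<lambda>w. w ^ 2 ^ k) -` {z ^ 2 ^ k} \<inter> circleT)"
    using assms power_preimage_in_sets[OF sets] by (intro finite_measure_mono) auto
  also have "\<dots> = measure M {z ^ 2 ^ k}"
    by (rule measure_power2_preimage[OF sets])
  finally show ?thesis .
qed

lemma atom_power2: "atom M z \<Longrightarrow> atom M (z ^ 2 ^ k)"
  using measure_singleton_le_power2[of z k] by (auto simp: atom_iff power_in_circleT)

lemma measure_two_preimages_le:
  assumes "u \<in> circleT" "v \<in> circleT" "u \<noteq> v" "u ^ 2 ^ k = c" "v ^ 2 ^ k = c"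
  shows "measure M {u} + measure M {v} \<le> measure M {c}"
proof -
  have c: "{c} \<in> sets M"
    using assms(1,4) by (auto intro: singleton_in_sets power_in_circleT)
  have "measure M {u} + measure M {v} = measure M ({u} \<union> {v})"
    using assms(1-3) by (intro finite_measure_Union[symmetric] singleton_in_sets) auto
  also have "\<dots> \<le> measure M ((\<lambda>w. w ^ 2 ^ k) -` {c} \<inter> circleT)"
    using assms power_preimage_in_sets[OF c] by (intro finite_measure_mono) auto
  also have "\<dots> = measure M {c}"
    by (rule measure_power2_preimage[OF c])
  finally show ?thesis .
qed

lemma finite_heavy_points:
  assumes "m > 0"
  shows "finite {z \<in> circleT. m \<le> measure M {z}}"
proof (rule ccontr)
  assume "infinite {z \<in> circleT. m \<le> measure M {z}}"
  then obtain B where B: "finite B" "card B = nat \<lceil>1 / m\<rceil> + 1" "B \<subseteq> {z \<in> circleT. m \<le> measure M {z}}"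
    using infinite_arbitrarily_large by blast
  have "real (card B) * m \<le> (\<Sum>z\<in>B. measure M {z})"
    using B(3) by (intro sum_bounded_below[of B m, simplified]) auto
  also have "\<dots> = measure M B"
    using B(1,3) singleton_in_sets by (intro finite_measure_eq_sum_singleton[symmetric]) auto
  also have "\<dots> \<le> 1"
    by (rule prob_le_1)
  finally have "real (card B) * m \<le> 1" .
  moreover have "1 / m + 1 \<le> real (card B)"
    using B(2) real_nat_ceiling_ge[of "1 / m"] by simp
  then have "(1 / m + 1) * m \<le> real (card B) * m"
    using assms by (intro mult_right_mono) auto
  then have "1 < real (card B) * m"
    using assms by (simp add: distrib_right)
  ultimately show False
    by linarith
qed

lemma atom_orbit_cancel:
  assumes "atom M z" "i < j" "z ^ 2 ^ Suc i = z ^ 2 ^ Suc j"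
  shows "z ^ 2 ^ i = z ^ 2 ^ j"
proof (rule ccontr)
  assume ne: "z ^ 2 ^ i \<noteq> z ^ 2 ^ j"
  have zT: "z \<in> circleT"
    using assms(1) by (simp add: atom_iff)
  have "(z ^ 2 ^ i) ^ 2 ^ 1 = z ^ 2 ^ Suc i" "(z ^ 2 ^ j) ^ 2 ^ 1 = z ^ 2 ^ Suc i"
    using assms(3) by (simp_all add: mult.commute flip: power_mult)
  then have "measure M {z ^ 2 ^ i} + measure M {z ^ 2 ^ j} \<le> measure M {z ^ 2 ^ Suc i}"
    using ne zT by (intro measure_two_preimages_le power_in_circleT)
  moreover have "(2::nat) ^ Suc i * 2 ^ (j - Suc i) = 2 ^ j"
    using assms(2) by (subst power_add[symmetric]) simp
  then have "(z ^ 2 ^ Suc i) ^ 2 ^ (j - Suc i) = z ^ 2 ^ j"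
    by (metis power_mult)
  then have "measure M {z ^ 2 ^ Suc i} \<le> measure M {z ^ 2 ^ j}"
    using measure_singleton_le_power2[of "z ^ 2 ^ Suc i" "j - Suc i"] zT power_in_circleT by metis
  moreover have "measure M {z ^ 2 ^ i} > 0"
    using atom_power2[OF assms(1)] by (simp add: atom_iff)
  ultimately show False
    by linarith
qed

lemma atom_periodic:
  assumes "atom M z"
  obtains k where "k \<ge> 1" "z ^ 2 ^ k = z"
proof -
  have zT: "z \<in> circleT" and pos: "measure M {z} > 0"
    using assms by (simp_all add: atom_iff)
  have "range (\<lambda>n. z ^ 2 ^ n) \<subseteq> {w \<in> circleT. measure M {z} \<le> measure M {w}}"
    using measure_singleton_le_power2[OF zT] power_in_circleT[OF zT] by auto
  then have "finite (range (\<lambda>n. z ^ 2 ^ n))"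
    using finite_heavy_points[OF pos] finite_subset by blast
  then obtain i j where ij: "i < j" "z ^ 2 ^ i = z ^ 2 ^ j"
    using range_inj_infinite[of "\<lambda>n. z ^ 2 ^ n"] unfolding inj_def by (metis linorder_neqE_nat)
  have "z ^ 2 ^ (j - i) = z"
    using ij
  proof (induction i arbitrary: j)
    case 0
    then show ?case
      by simp
  next
    case (Suc i)
    then obtain j' where "j = Suc j'" "i < j'"
      by (cases j) auto
    with Suc show ?case
      using atom_orbit_cancel[OF assms] by simp
  qed
  with ij(1) show ?thesis
    by (intro that[of "j - i"]) auto
qed

lemma atom_in_support:
  assumes "atom M z"
  shows "z \<in> measure_support M"
  unfolding measure_support_def
proof (intro CollectI conjI allI impI)
  show "z \<in> circleT"
    using assms by (simp add: atom_iff)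
  fix U assume U: "openin (top_of_set circleT) U \<and> z \<in> U"
  then have "emeasure M {z} \<le> emeasure M U"
    using openin_in_sets by (intro emeasure_mono) auto
  with assms show "emeasure M U > 0"
    unfolding atom_def using order.strict_trans2 by blast
qed

lemma complement_support_null: "circleT - measure_support M \<in> null_sets M"
proof -
  define \<U> where "\<U> = {U. openin (top_of_set circleT) U \<and> emeasure M U = 0}"
  have "circleT - measure_support M = \<Union>\<U>"
  proof (intro equalityI subsetI)
    fix w assume "w \<in> circleT - measure_support M"
    then obtain U where "openin (top_of_set circleT) U" "w \<in> U" "\<not> emeasure M U > 0"
      unfolding measure_support_def by auto
    then show "w \<in> \<Union>\<U>"
      unfolding \<U>_def by (auto simp: not_gr_zero)
  next
    fix w assume "w \<in> \<Union>\<U>"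
    then obtain U where "openin (top_of_set circleT) U" "emeasure M U = 0" "w \<in> U"
      unfolding \<U>_def by auto
    then show "w \<in> circleT - measure_support M"
      using openin_subset unfolding measure_support_def by fastforce
  qed
  moreover have "\<And>U. U \<in> \<U> \<Longrightarrow> openin (top_of_set circleT) U"
    unfolding \<U>_def by simp
  then obtain \<V> where "\<V> \<subseteq> \<U>" "countable \<V>" "\<Union>\<V> = \<Union>\<U>"
    using Lindelof_openin[of \<U> circleT] by metis
  moreover have "\<Union>\<V> \<in> null_sets M"
  proof (rule null_sets_UN'[OF \<open>countable \<V>\<close>, of id, simplified])
    fix U assume "U \<in> \<V>"
    then show "U \<in> null_sets M"
      using \<open>\<V> \<subseteq> \<U>\<close> openin_in_sets by (auto simp: \<U>_def null_sets_def)
  qed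
  ultimately show ?thesis
    by simp
qed

lemma singleton_null_if_power2_collides:
  assumes "u \<in> circleT" "v \<in> circleT" "u \<noteq> v" "u ^ 2 ^ k = u" "v ^ 2 ^ k = u"
  shows "{v} \<in> null_sets M"
proof -
  have "measure M {u} + measure M {v} \<le> measure M {u}"
    using measure_two_preimages_le[OF assms] .
  then have "measure M {v} = 0"
    using measure_nonneg[of M "{v}"] by linarith
  then show ?thesis
    using singleton_in_sets[OF assms(2)] by (simp add: null_sets_def emeasure_eq_measure)
qed

section \<open>Removing the atomic jumps\<close>

lemma null_neighbourhood_of_b:
  assumes chart: "jump_chart \<eta> x \<sigma> a b \<delta>" and supp: "measure_support M \<subseteq> closure (\<eta> ` circleT)"
    and period: "k \<ge> 1" "a ^ 2 ^ k = a"
  obtains \<rho> where "\<rho> > 0" "circleT \<inter> ball b \<rho> \<in> null_sets M"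
proof -
  interpret jump_chart \<eta> x \<sigma> a b \<delta>
    by (rule chart)
  define N where "N = circleT - measure_support M"
  define P where "P = (\<lambda>w. w ^ 2 ^ k) -` N \<inter> circleT"
  have N: "N \<in> null_sets M"
    using complement_support_null by (simp add: N_def)
  then have P: "P \<in> null_sets M"
    using emeasure_power2_preimage power_preimage_in_sets by (simp add: P_def null_sets_def)
  have "b ^ 2 ^ k = a"
    using period by (simp add: b_eq power_minus_even)
  then have b: "{b} \<in> null_sets M"
    using singleton_null_if_power2_collides[OF a_in_circleT b_in_circleT a_ne_b period(2)] by simp
  obtain \<rho> where \<rho>: "\<rho> > 0" "\<And>w. w \<in> circleT \<Longrightarrow> dist w b < \<rho> \<Longrightarrow>
    w = b \<or> w \<notin> closure (\<eta> ` circleT) \<or> w ^ 2 ^ k \<notin> closure (\<eta> ` circleT)"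
    using near_b_cases[OF period] by blast
  have "circleT \<inter> ball b \<rho> \<subseteq> N \<union> {b} \<union> P"
    using \<rho>(2) supp power_in_circleT by (fastforce simp: N_def P_def dist_commute)
  moreover have "N \<union> {b} \<union> P \<in> null_sets M"
    using N P b by (intro null_sets.Un)
  moreover have "circleT \<inter> ball b \<rho> \<in> sets M"
    by (intro openin_in_sets openin_open_Int) auto
  ultimately show ?thesis
    using that[OF \<rho>(1)] null_sets_subset by blast
qed

lemma free_b_side:
  assumes chart: "jump_chart \<eta> x \<sigma> a b \<delta>" and supp: "measure_support M \<subseteq> closure (\<eta> ` circleT)"
    and period: "k \<ge> 1" "a ^ 2 ^ k = a"
  obtains \<epsilon> where "\<epsilon> > 0" "\<forall>u\<in>{0..\<epsilon>}. b * cis (pi * (\<sigma> * u)) \<notin> measure_support M"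
proof -
  obtain \<rho> where \<rho>: "\<rho> > 0" "circleT \<inter> ball b \<rho> \<in> null_sets M"
    using null_neighbourhood_of_b[OF assms] .
  moreover have "openin (top_of_set circleT) (circleT \<inter> ball b \<rho>)"
    by (intro openin_open_Int) auto
  ultimately have free: "circleT \<inter> ball b \<rho> \<inter> measure_support M = {}"
    unfolding measure_support_def null_sets_def by auto
  have "isCont (\<lambda>u. b * cis (pi * (\<sigma> * u))) 0"
    unfolding cis_conv_exp by (intro continuous_intros)
  then obtain e where e: "e > 0" "\<And>u. \<bar>u\<bar> < e \<Longrightarrow> dist (b * cis (pi * (\<sigma> * u))) b < \<rho>"
    using \<rho>(1) unfolding continuous_at_eps_delta by (auto simp: dist_real_def)
  show ?thesis
  proof (rule that[of "e / 2"])
    show "\<forall>u\<in>{0..e / 2}. b * cis (pi * (\<sigma> * u)) \<notin> measure_support M"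
    proof
      fix u :: real assume "u \<in> {0..e / 2}"
      then have "dist (b * cis (pi * (\<sigma> * u))) b < \<rho>"
        using e by simp
      moreover have "b * cis (pi * (\<sigma> * u)) \<in> circleT"
        using jump_chart.b_in_circleT[OF chart] by (simp add: circleT_iff_norm norm_mult)
      ultimately show "b * cis (pi * (\<sigma> * u)) \<notin> measure_support M"
        using free by (auto simp: dist_commute)
    qed
  qed (use e in simp)
qed

lemma remove_atomic_jump:
  assumes sel: "preimage_selector \<eta>" and supp: "measure_support M \<subseteq> closure (\<eta> ` circleT)"
    and d: "d \<in> discont \<eta>" "atom M d"
  obtains \<eta>' where "preimage_selector \<eta>'" "measure_support M \<subseteq> closure (\<eta>' ` circleT)"
    "card (discont \<eta>') = card (discont \<eta>)"
    "discont \<eta>' \<inter> Collect (atom M) = discont \<eta> \<inter> Collect (atom M) - {d}"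
proof -
  obtain k where k: "k \<ge> 1" "d ^ 2 ^ k = d"
    using atom_periodic[OF d(2)] .
  define a where "a = d ^ 2 ^ (k - 1)"
  have "(2::nat) ^ (k - 1) * 2 = 2 ^ k"
    using k(1) by (simp flip: power_Suc2)
  then have a_square: "a ^ 2 = d"
    using k(2) by (simp add: a_def flip: power_mult)
  have "a ^ 2 ^ k = (d ^ 2 ^ k) ^ 2 ^ (k - 1)"
    by (simp add: a_def mult.commute flip: power_mult)
  then have a_period: "a ^ 2 ^ k = a"
    using k(2) by (simp add: a_def)
  have "jump_at \<eta> d"
    using sel d(1) by (simp add: preimage_selector_def)
  then obtain x \<sigma> \<delta> where x: "circ x = d" and chart: "jump_chart \<eta> x \<sigma> a (- a) \<delta>"
    using jump_chart_if_jump_at[OF sel _ a_square] by blast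
  obtain \<epsilon> where "\<epsilon> > 0" "\<forall>u\<in>{0..\<epsilon>}. - a * cis (pi * (\<sigma> * u)) \<notin> measure_support M"
    using free_b_side[OF chart supp k(1) a_period] by blast
  then obtain \<eta>' d' where \<eta>': "preimage_selector \<eta>'" "discont \<eta>' = insert d' (discont \<eta> - {d})"
    "d' \<notin> discont \<eta>" "\<not> atom M d'" "measure_support M \<subseteq> closure (\<eta>' ` circleT)"
    using jump_chart.move_jump[OF chart countable_atoms _ _ supp] x by (metis mem_Collect_eq)
  have "finite (discont \<eta>)"
    using sel by (simp add: preimage_selector_def)
  moreover have "card (discont \<eta>) > 0"
    using calculation d(1) card_gt_0_iff by blast
  ultimately have "card (discont \<eta>') = card (discont \<eta>)"
    using \<eta>'(2,3) d(1) by (simp add: card_insert_disjoint card_Diff_singleton)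
  moreover have "discont \<eta>' \<inter> Collect (atom M) = discont \<eta> \<inter> Collect (atom M) - {d}"
    using \<eta>'(2,4) by auto
  ultimately show ?thesis
    using that \<eta>'(1,5) by blast
qed

lemma exists_selector_without_atomic_jumps:
  assumes "preimage_selector \<eta>" "measure_support M \<subseteq> closure (\<eta> ` circleT)"
  obtains \<eta>' where "preimage_selector \<eta>'" "measure_support M \<subseteq> closure (\<eta>' ` circleT)"
    "card (discont \<eta>') = card (discont \<eta>)" "\<forall>z\<in>discont \<eta>'. \<not> atom M z"
  using assms
proof (induction "card (discont \<eta> \<inter> Collect (atom M))" arbitrary: \<eta> rule: less_induct)
  case less
  show ?case
  proof (cases "\<forall>z\<in>discont \<eta>. \<not> atom M z")
    case True
    then show ?thesis
      using less.prems by blast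
  next
    case False
    then obtain d where d: "d \<in> discont \<eta>" "atom M d"
      by blast
    obtain \<eta>1 where \<eta>1: "preimage_selector \<eta>1" "measure_support M \<subseteq> closure (\<eta>1 ` circleT)"
      "card (discont \<eta>1) = card (discont \<eta>)"
      "discont \<eta>1 \<inter> Collect (atom M) = discont \<eta> \<inter> Collect (atom M) - {d}"
      using remove_atomic_jump[OF less.prems(2,3) d] by blast
    have "finite (discont \<eta> \<inter> Collect (atom M))"
      using less.prems(2) by (simp add: preimage_selector_def)
    then have "card (discont \<eta>1 \<inter> Collect (atom M)) < card (discont \<eta> \<inter> Collect (atom M))"
      unfolding \<eta>1(4) using d by (intro card_Diff1_less) auto
    then show ?thesis
      using less.hyps[OF _ _ \<eta>1(1,2)] less.prems(1) \<eta>1(3) by metis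
  qed
qed

end

theorem lemma4:
  fixes M :: "complex measure" and p :: nat and F :: "complex set"
  assumes "prob_space M"
    and "sets M = sets (restrict_space borel circleT)"
    and "E2_invariant M"
    and "flower p F"
    and "measure_support M \<subseteq> F"
  shows "\<exists>F'. flower p F' \<and> measure_support M \<subseteq> F' \<and>
           (\<forall>x. atom M x \<longrightarrow> x \<in> (top_of_set circleT) interior_of F')"
proof -
  interpret E2_invariant_prob_space M
    using assms(1-3) by (simp add: E2_invariant_prob_space_def E2_invariant_prob_space_axioms_def)
  obtain \<eta> where \<eta>: "preimage_selector \<eta>" "card (discont \<eta>) = p" "F = closure (\<eta> ` circleT)"
    using assms(4) unfolding flower_def by blast
  obtain \<eta>' where \<eta>': "preimage_selector \<eta>'" "measure_support M \<subseteq> closure (\<eta>' ` circleT)"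
    "card (discont \<eta>') = p" "\<forall>z\<in>discont \<eta>'. \<not> atom M z"
    using exists_selector_without_atomic_jumps[OF \<eta>(1)] assms(5) \<eta>(2,3) by metis
  have "y \<in> (top_of_set circleT) interior_of closure (\<eta>' ` circleT)" if "atom M y" for y
  proof (rule in_interior_closure_selector_image[OF \<eta>'(1)])
    show "y \<in> closure (\<eta>' ` circleT)"
      using atom_in_support[OF that] \<eta>'(2) by blast
    have "atom M (E2 y)"
      using atom_power2[OF that, of 1] by (simp add: E2_def)
    then show "continuous (at (E2 y) within circleT) \<eta>'"
      using \<eta>'(4) by (auto simp: discont_def atom_iff)
  qed
  with \<eta>' show ?thesis
    unfolding flower_def by blast
qed

end
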